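(* Let $\mathcal{X}\subset\mathbb{R}^D$, let $\mathcal{D}$ be a probability distribution on $\mathcal{X}$, and let $\mathcal{S}=\{\mathbf{x}_1,\dots,\mathbf{x}_n\}$ consist of $n$ i.i.d. samples from $\mathcal{D}$. Let $N_\phi,N_\theta$ be positive integers and let $\ell:\mathbb{R}^{N_\phi}\times\mathbb{R}^{N_\theta}\times\mathcal{X}\to[0,1]$ be a measurable loss. Define $R(\phi,\theta)=\mathbb{E}_{\mathbf{x}\sim\mathcal{D}}[\ell(\phi,\theta,\mathbf{x})]$ and $\widehat{R}_{\mathcal{S}}(\phi,\theta)=\frac1n\sum_{i=1}^n\ell(\phi,\theta,\mathbf{x}_i)$. Let $\delta\in(0,1)$, fix $\phi^0\in\mathbb{R}^{N_\phi}$, $\theta^0\in\mathbb{R}^{N_\theta}$ and $\sigma_\phi^2>0$, $\sigma_\theta^2>0$ (all chosen independently of $\mathcal{S}$). Then with probability at least $1-\delta$ over $\mathcal{S}\sim\mathcal{D}^n$, simultaneously for all $\phi\in\mathbb{R}^{N_\phi}$, $\theta\in\mathbb{R}^{N_\theta}$, $s_\phi^2>0$, $s_\theta^2>0$, \begin{align*} \mathbb{E}_{\tilde\phi\sim\mathcal{N}(\phi,s^2_\phi I),\,\tilde\theta\sim\mathcal{N}(\theta,s^2_\theta I)}[R(\tilde\phi,\tilde\theta)] &\leq \mathbb{E}_{\tilde\phi\sim\mathcal{N}(\phi,s^2_\phi I),\,\tilde\theta\sim\mathcal{N}(\theta,s^2_\theta I)}[\widehat{R}_{\mathcal{S}}(\tilde\phi,\tilde\theta)]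 \\ &\quad + \sqrt{\frac{\|\phi-\phi^0\|_2^2}{4\sigma^2_\phi n} +\frac{N_\phi\left(\frac{s^2_\phi}{\sigma^2_\phi} + \log\frac{\sigma_\phi^2}{s_\phi^2} - 1\right)}{4n} + \frac{\log\frac{2\sqrt{n}}{\delta}}{2n}} \\ &\quad + \sqrt{\frac{\|\theta-\theta^0\|_2^2}{4\sigma^2_\theta n} +\frac{N_\theta\left(\frac{s^2_\theta}{\sigma^2_\theta} + \log\frac{\sigma_\theta^2}{s_\theta^2} - 1\right)}{4n} + \frac{\log\frac{2\sqrt{n}}{\delta}}{2n}} . \end{align*}
   Context: In the paper $\phi$ and $\theta$ are the weight vectors of the encoder and decoder neural networks of a (pseudo-)variational autoencoder, $N_\phi$ and $N_\theta$ are the numbers of weights of these networks, and $\ell(\phi,\theta,\mathbf{x})$ is a rescaled, truncated reconstruction loss $-\mathbb{E}_{q_\phi(\mathbf{z}|\mathbf{x})}[\log p_\theta(\mathbf{x}|\mathbf{z})]$ taking values in $[0,1]$; only boundedness in $[0,1]$ and measurability are used. $\mathcal{N}(m,s^2I)$ denotes the isotropic Gaussian with mean $m$ and covariance $s^2I$ in the appropriate dimension; the expectations are over independent $\tilde\phi,\tilde\theta$. *)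

theory Defs
  imports "HOL-Probability.Probability"
begin

text \<open>Isotropic Gaussian N(m, v I) on real^'n, parametrised by the VARIANCE v > 0:
  density w.r.t. Lebesgue measure is the product of one-dimensional normal densities
  with mean m$i and standard deviation sqrt v.\<close>
definition iso_gauss :: "real^'n \<Rightarrow> real \<Rightarrow> (real^'n) measure" where
  "iso_gauss m v = density lborel (\<lambda>x. ennreal (\<Prod>i\<in>UNIV. normal_density (m $ i) (sqrt v) (x $ i)))"

definition pop_risk :: "'x measure \<Rightarrow> ('p \<Rightarrow> 'q \<Rightarrow> 'x \<Rightarrow> real) \<Rightarrow> 'p \<Rightarrow> 'q \<Rightarrow> real" where
  "pop_risk D l phi theta = (\<integral>x. l phi theta x \<partial>D)"

definition emp_risk :: "nat \<Rightarrow> (nat \<Rightarrow> 'x) \<Rightarrow> ('p \<Rightarrow> 'q \<Rightarrow> 'x \<Rightarrow> real) \<Rightarrow> 'p \<Rightarrow> 'q \<Rightarrow> real" where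
  "emp_risk n S l phi theta = (\<Sum>i<n. l phi theta (S i)) / real n"

end

theory Submission
  imports Defs
begin

text \<open>For a fixed parameter \<open>w\<close>, Hoeffding's inequality gives sub-Gaussian tails for the gap
  between population and empirical risk, so over the sample the exponential moment of
  \<open>2 n gap\<^sup>2\<close> is at most \<open>e (1 + 4 n)\<close>. By Fubini and Markov, outside an event of probability
  \<open>\<delta>\<close> its average over the Gaussian prior \<open>P\<close> is at most \<open>e (1 + 4 n) / \<delta>\<close>. For a Gaussian
  posterior \<open>Q\<close> the Donsker-Varadhan change of measure turns this into
  \<open>2 n E\<^sub>Q gap\<^sup>2 \<le> KL(Q, P) + ln (e (1 + 4 n) / \<delta>)\<close>; the KL divergence splits over the two
  factors of the product Gaussian and Jensen bounds \<open>(E\<^sub>Q gap)\<^sup>2\<close> by \<open>E\<^sub>Q gap\<^sup>2\<close>. Finally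
  \<open>ln (e (1 + 4 n) / \<delta>) \<le> 4 ln (2 sqrt n / \<delta>)\<close>, and the factor 4 is exactly what
  \<open>sqrt (a + b + 4 c) \<le> sqrt (a + c) + sqrt (b + c)\<close> needs to split the root into the two
  stated terms.\<close>

section \<open>Isotropic Gaussians\<close>

lemma nn_integral_lborel_vec_prod:
  fixes g :: "'n::finite \<Rightarrow> real \<Rightarrow> ennreal"
  assumes [measurable]: "\<And>i. g i \<in> borel_measurable borel"
  shows "(\<integral>\<^sup>+x. (\<Prod>i\<in>UNIV. g i (x$i)) \<partial>(lborel::(real^'n) measure)) = (\<Prod>i\<in>UNIV. \<integral>\<^sup>+t. g i t \<partial>lborel)"
proof -
  let ?e = "\<lambda>i::'n. axis i (1::real)"
  have Basis: "(Basis :: (real^'n) set) = range ?e"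
    by (auto simp: Basis_vec_def)
  have inj: "inj ?e"
    by (auto simp: inj_def axis_eq_axis)
  define G where "G b = g (inv ?e b)" for b
  have G: "G (?e i) = g i" for i
    unfolding G_def inv_f_f[OF inj] ..
  have "(\<integral>\<^sup>+x. (\<Prod>b\<in>Basis. G b (x \<bullet> b)) \<partial>(lborel::(real^'n) measure)) = (\<Prod>b\<in>Basis. \<integral>\<^sup>+t. G b t \<partial>lborel)"
    by (rule nn_integral_lborel_prod) (auto simp: Basis G)
  then show ?thesis
    unfolding Basis prod.reindex[OF inj] by (simp add: G inner_axis)
qed

lemma nn_integral_normal_density_eq_1:
  assumes "\<sigma> > 0"
  shows "(\<integral>\<^sup>+t. ennreal (normal_density \<mu> \<sigma> t) \<partial>lborel) = 1"
  using assms by (subst nn_integral_eq_integral) auto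

lemma nn_integral_iso_gauss_component:
  fixes m :: "real^'n" and h :: "real \<Rightarrow> ennreal"
  assumes v: "v > 0" and [measurable]: "h \<in> borel_measurable borel"
  shows "(\<integral>\<^sup>+x. h (x$i) \<partial>iso_gauss m v) = (\<integral>\<^sup>+t. normal_density (m$i) (sqrt v) t * h t \<partial>lborel)"
proof -
  define g where "g j t = ennreal (normal_density (m$j) (sqrt v) t) * (if j = i then h t else 1)" for j t
  have "(\<integral>\<^sup>+x. h (x$i) \<partial>iso_gauss m v) = (\<integral>\<^sup>+x. (\<Prod>j\<in>UNIV. g j (x$j)) \<partial>lborel)"
    unfolding iso_gauss_def g_def
    by (subst nn_integral_density) (auto simp: prod.distrib prod_ennreal intro!: nn_integral_cong)
  also have "\<dots> = (\<Prod>j\<in>UNIV. \<integral>\<^sup>+t. g j t \<partial>lborel)"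
    by (rule nn_integral_lborel_vec_prod) (simp add: g_def)
  also have "\<dots> = (\<Prod>j\<in>UNIV. if j = i then \<integral>\<^sup>+t. normal_density (m$i) (sqrt v) t * h t \<partial>lborel else 1)"
    using v by (intro prod.cong) (auto simp: g_def nn_integral_normal_density_eq_1)
  finally show ?thesis by simp
qed

lemma sets_iso_gauss [simp, measurable_cong]: "sets (iso_gauss m v) = sets borel"
  by (simp add: iso_gauss_def)

lemma space_iso_gauss [simp]: "space (iso_gauss m v) = UNIV"
  by (simp add: iso_gauss_def)

lemma prob_space_iso_gauss:
  assumes "v > 0"
  shows "prob_space (iso_gauss (m::real^'n) v)"
proof
  have "emeasure (iso_gauss m v) (space (iso_gauss m v)) = (\<integral>\<^sup>+x. (\<lambda>_. 1) (x$undefined) \<partial>iso_gauss m v)"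
    \<comment> \<open>any coordinate will do\<close>
    by simp
  also have "\<dots> = 1"
    using assms by (subst nn_integral_iso_gauss_component) (auto simp: nn_integral_normal_density_eq_1)
  finally show "emeasure (iso_gauss m v) (space (iso_gauss m v)) = 1" .
qed

lemma distr_iso_gauss_component:
  fixes m :: "real^'n"
  assumes "v > 0"
  shows "distr (iso_gauss m v) borel (\<lambda>x. x$i) = density lborel (normal_density (m$i) (sqrt v))"
proof (rule measure_eqI)
  fix A :: "real set" assume "A \<in> sets (distr (iso_gauss m v) borel (\<lambda>x. x$i))"
  then have [measurable]: "A \<in> sets borel" by simp
  have "emeasure (distr (iso_gauss m v) borel (\<lambda>x. x$i)) A = (\<integral>\<^sup>+x. indicator A (x$i) \<partial>iso_gauss m v)"
  proof -
    have "(\<lambda>x::real^'n. x$i) -` A \<in> sets (iso_gauss m v)"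
      using measurable_sets[of "\<lambda>x::real^'n. x$i" borel borel A] by simp
    then show ?thesis
      by (subst emeasure_distr) (simp_all add: nn_integral_indicator[symmetric] indicator_vimage)
  qed
  also have "\<dots> = emeasure (density lborel (normal_density (m$i) (sqrt v))) A"
    using assms by (subst nn_integral_iso_gauss_component) (auto simp: emeasure_density)
  finally show "emeasure (distr (iso_gauss m v) borel (\<lambda>x. x$i)) A = emeasure (density lborel (normal_density (m$i) (sqrt v))) A" .
qed simp

lemma iso_gauss_component_moments:
  fixes m :: "real^'n"
  assumes v: "v > 0"
  shows "integrable (iso_gauss m v) (\<lambda>x. x$i - m$i)"
    and "integrable (iso_gauss m v) (\<lambda>x. (x$i - m$i)^2)"
    and "(\<integral>x. x$i - m$i \<partial>iso_gauss m v) = 0"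
    and "(\<integral>x. (x$i - m$i)^2 \<partial>iso_gauss m v) = v"
proof -
  have sv: "sqrt v > 0" using v by simp
  have int: "integrable (iso_gauss m v) (\<lambda>x. (x$i - m$i)^k)" for k
    using integrable_normal_moment[OF sv, of "m$i" k]
    by (subst integrable_distr_eq[where N=borel and f="\<lambda>t. (t - m$i)^k" and g="\<lambda>x. x$i", symmetric])
       (auto simp: distr_iso_gauss_component[OF v] integrable_density)
  have int_eq: "(\<integral>x. (x$i - m$i)^k \<partial>iso_gauss m v) = (\<integral>t. normal_density (m$i) (sqrt v) t * (t - m$i)^k \<partial>lborel)" for k
    by (subst integral_distr[where N=borel and f="\<lambda>t. (t - m$i)^k" and g="\<lambda>x. x$i", symmetric])
       (auto simp: distr_iso_gauss_component[OF v] integral_density)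
  show "integrable (iso_gauss m v) (\<lambda>x. x$i - m$i)"
    using int[of 1] by simp
  show "integrable (iso_gauss m v) (\<lambda>x. (x$i - m$i)^2)"
    by (rule int)
  show "(\<integral>x. x$i - m$i \<partial>iso_gauss m v) = 0"
    using int_eq[of 1] integral_normal_moment_odd[OF sv, of "m$i" 0] by simp
  show "(\<integral>x. (x$i - m$i)^2 \<partial>iso_gauss m v) = v"
    using int_eq[of 2] integral_normal_moment_even[OF sv, of "m$i" 1] v by simp
qed

section \<open>Kullback-Leibler divergence of isotropic Gaussians\<close>

definition iso_gauss_pdf :: "real^'n \<Rightarrow> real \<Rightarrow> real^'n \<Rightarrow> real" where
  "iso_gauss_pdf m v x = (\<Prod>i\<in>UNIV. normal_density (m $ i) (sqrt v) (x $ i))"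

lemma iso_gauss_pdf_pos: "v > 0 \<Longrightarrow> iso_gauss_pdf m v x > 0"
  unfolding iso_gauss_pdf_def by (intro prod_pos normal_density_pos) auto

lemma borel_measurable_iso_gauss_pdf [measurable]: "iso_gauss_pdf m v \<in> borel_measurable borel"
  unfolding iso_gauss_pdf_def by measurable

text \<open>\<open>KL(N(m, s I) \<parallel> N(m0, v I))\<close>, with \<open>s\<close> and \<open>v\<close> variances.\<close>
definition kl_iso_gauss :: "real^'n \<Rightarrow> real \<Rightarrow> real^'n \<Rightarrow> real \<Rightarrow> real" where
  "kl_iso_gauss m s m0 v = (norm (m - m0))\<^sup>2 / (2 * v) + real CARD('n) * (s / v + ln (v / s) - 1) / 2"

lemma kl_iso_gauss_nonneg:
  assumes "s > 0" "v > 0"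
  shows "0 \<le> kl_iso_gauss m s m0 v"
proof -
  have "ln (s / v) \<le> s / v - 1"
    using assms by (intro ln_le_minus_one) auto
  then have "0 \<le> s / v + ln (v / s) - 1"
    using assms by (simp add: ln_div)
  then show ?thesis
    using assms unfolding kl_iso_gauss_def by simp
qed

lemma ln_normal_density_sqrt:
  assumes "s > 0"
  shows "ln (normal_density \<mu> (sqrt s) x) = - ln (2 * pi * s) / 2 - (x - \<mu>)\<^sup>2 / (2 * s)"
  using assms by (simp add: normal_density_def ln_div ln_sqrt)

lemma ln_normal_density_ratio:
  assumes "s > 0" "v > 0"
  shows "ln (normal_density \<mu> (sqrt s) x) - ln (normal_density \<mu>0 (sqrt v) x) =
    ln (v / s) / 2 + (\<mu> - \<mu>0)\<^sup>2 / (2 * v) + (1 / (2 * v) - 1 / (2 * s)) * (x - \<mu>)\<^sup>2 + (\<mu> - \<mu>0) / v * (x - \<mu>)"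
proof -
  have "ln (v / s) = ln (2 * pi * v) - ln (2 * pi * s)"
    using assms by (simp add: ln_div ln_mult)
  moreover have "(x - \<mu>0)\<^sup>2 / (2 * v) = (x - \<mu>)\<^sup>2 / (2 * v) + (\<mu> - \<mu>0) / v * (x - \<mu>) + (\<mu> - \<mu>0)\<^sup>2 / (2 * v)"
    using assms by (simp add: power2_eq_square field_simps)
  moreover have "(1 / (2 * v) - 1 / (2 * s)) * (x - \<mu>)\<^sup>2 = (x - \<mu>)\<^sup>2 / (2 * v) - (x - \<mu>)\<^sup>2 / (2 * s)"
    by (simp add: left_diff_distrib)
  ultimately show ?thesis
    using assms by (simp add: ln_normal_density_sqrt diff_divide_distrib)
qed

lemma ln_iso_gauss_pdf_ratio:
  fixes m m0 :: "real^'n"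
  assumes "s > 0" "v > 0"
  shows "ln (iso_gauss_pdf m s x) - ln (iso_gauss_pdf m0 v x) =
    (\<Sum>i\<in>UNIV. ln (v / s) / 2 + (m$i - m0$i)\<^sup>2 / (2 * v)
       + (1 / (2 * v) - 1 / (2 * s)) * (x$i - m$i)\<^sup>2 + (m$i - m0$i) / v * (x$i - m$i))"
proof -
  have "normal_density \<mu> (sqrt r) y \<noteq> 0" if "r > 0" for \<mu> r y
    using normal_density_pos[of "sqrt r" \<mu> y] that by simp
  then show ?thesis
    using assms unfolding iso_gauss_pdf_def
    by (simp add: ln_prod sum_subtractf[symmetric] ln_normal_density_ratio)
qed

lemma integral_ln_iso_gauss_pdf_ratio:
  fixes m m0 :: "real^'n"
  assumes s: "s > 0" and v: "v > 0"
  defines "L \<equiv> \<lambda>x. ln (iso_gauss_pdf m s x) - ln (iso_gauss_pdf m0 v x)"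
  shows "integrable (iso_gauss m s) L" and "(\<integral>x. L x \<partial>iso_gauss m s) = kl_iso_gauss m s m0 v"
proof -
  interpret prob_space "iso_gauss m s"
    using s by (rule prob_space_iso_gauss)
  define c where "c i = ln (v / s) / 2 + (m$i - m0$i)\<^sup>2 / (2 * v)" for i
  define a where "a = 1 / (2 * v) - 1 / (2 * s)"
  define b where "b i = (m$i - m0$i) / v" for i
  have L: "L = (\<lambda>x. \<Sum>i\<in>UNIV. c i + a * (x$i - m$i)\<^sup>2 + b i * (x$i - m$i))"
    using s v by (simp add: L_def ln_iso_gauss_pdf_ratio a_def b_def c_def fun_eq_iff)
  note moments = iso_gauss_component_moments[OF s, of m]
  have int: "integrable (iso_gauss m s) (\<lambda>x. c i + a * (x$i - m$i)\<^sup>2 + b i * (x$i - m$i))" for i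
    using moments by auto
  then show "integrable (iso_gauss m s) L"
    unfolding L by auto
  have "(\<integral>x. L x \<partial>iso_gauss m s) = (\<Sum>i\<in>UNIV. c i + a * s)"
    unfolding L using int moments prob_space by simp
  also have "\<dots> = (\<Sum>i\<in>UNIV. (m$i - m0$i)\<^sup>2) / (2 * v) + real CARD('n) * (ln (v / s) / 2 + a * s)"
    by (simp add: c_def sum.distrib sum_divide_distrib algebra_simps)
  also have "(\<Sum>i\<in>UNIV. (m$i - m0$i)\<^sup>2) = (norm (m - m0))\<^sup>2"
    by (subst power2_norm_eq_inner) (simp add: inner_vec_def power2_eq_square)
  also have "ln (v / s) / 2 + a * s = (s / v + ln (v / s) - 1) / 2"
    using s v by (simp add: a_def field_simps)
  finally show "(\<integral>x. L x \<partial>iso_gauss m s) = kl_iso_gauss m s m0 v"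
    by (simp add: kl_iso_gauss_def)
qed

lemma iso_gauss_eq_density_ln_ratio:
  fixes m m0 :: "real^'n"
  assumes "s > 0" "v > 0"
  shows "iso_gauss m0 v =
    density (iso_gauss m s) (\<lambda>x. ennreal (exp (- (ln (iso_gauss_pdf m s x) - ln (iso_gauss_pdf m0 v x)))))"
proof -
  have "ennreal (iso_gauss_pdf m s x) * ennreal (exp (- (ln (iso_gauss_pdf m s x) - ln (iso_gauss_pdf m0 v x))))
      = ennreal (iso_gauss_pdf m0 v x)" for x
    using iso_gauss_pdf_pos[OF assms(1), of m x] iso_gauss_pdf_pos[OF assms(2), of m0 x]
    by (simp add: ennreal_mult[symmetric] exp_diff)
  then show ?thesis
    unfolding iso_gauss_def iso_gauss_pdf_def[symmetric] by (subst density_density_eq) auto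
qed

lemma integral_pair_measure_fst_add_snd:
  fixes f :: "'a \<Rightarrow> real" and g :: "'b \<Rightarrow> real"
  assumes M1: "prob_space M1" and M2: "prob_space M2"
    and f: "integrable M1 f" and g: "integrable M2 g"
  shows "integrable (M1 \<Otimes>\<^sub>M M2) (\<lambda>w. f (fst w) + g (snd w))"
    and "(\<integral>w. f (fst w) + g (snd w) \<partial>(M1 \<Otimes>\<^sub>M M2)) = (\<integral>x. f x \<partial>M1) + (\<integral>y. g y \<partial>M2)"
proof -
  interpret M1: prob_space M1 by fact
  interpret M2: prob_space M2 by fact
  interpret pair_sigma_finite M1 M2 ..
  interpret swap: pair_sigma_finite M2 M1 ..
  have [measurable]: "f \<in> borel_measurable M1" "g \<in> borel_measurable M2"
    using f g by auto
  have f': "integrable (M1 \<Otimes>\<^sub>M M2) (\<lambda>w. f (fst w))"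
    using integrable_distr_eq[OF measurable_fst[of M1 M2], where f=f] f by (simp add: M2.distr_pair_fst)
  have "integrable (M2 \<Otimes>\<^sub>M M1) (\<lambda>w. g (fst w))"
    using integrable_distr_eq[OF measurable_fst[of M2 M1], where f=g] g by (simp add: M1.distr_pair_fst)
  then have g': "integrable (M1 \<Otimes>\<^sub>M M2) (\<lambda>w. g (snd w))"
    using integrable_product_swap_iff[of "\<lambda>w. g (snd w)"] by (simp add: case_prod_unfold)
  from f' g' show "integrable (M1 \<Otimes>\<^sub>M M2) (\<lambda>w. f (fst w) + g (snd w))"
    by simp
  have "(\<integral>w. f (fst w) \<partial>(M1 \<Otimes>\<^sub>M M2)) = (\<integral>x. f x \<partial>M1)"
    using integral_distr[OF measurable_fst[of M1 M2], where f=f] by (simp add: M2.distr_pair_fst)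
  moreover have "(\<integral>w. g (snd w) \<partial>(M1 \<Otimes>\<^sub>M M2)) = (\<integral>w. g (fst w) \<partial>(M2 \<Otimes>\<^sub>M M1))"
    using integral_product_swap[of "\<lambda>w. g (snd w)"] by (simp add: case_prod_unfold)
  moreover have "\<dots> = (\<integral>y. g y \<partial>M2)"
    using integral_distr[OF measurable_fst[of M2 M1], where f=g] by (simp add: M1.distr_pair_fst)
  ultimately show "(\<integral>w. f (fst w) + g (snd w) \<partial>(M1 \<Otimes>\<^sub>M M2)) = (\<integral>x. f x \<partial>M1) + (\<integral>y. g y \<partial>M2)"
    using f' g' by simp
qed

lemma iso_gauss_pair_eq_density:
  fixes m m0 :: "real^'n" and k k0 :: "real^'m"
  assumes s: "s > 0" and t: "t > 0" and v: "v > 0" and u: "u > 0"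
  obtains L where
    "iso_gauss m0 v \<Otimes>\<^sub>M iso_gauss k0 u = density (iso_gauss m s \<Otimes>\<^sub>M iso_gauss k t) (\<lambda>w. ennreal (exp (- L w)))"
    "integrable (iso_gauss m s \<Otimes>\<^sub>M iso_gauss k t) L"
    "(\<integral>w. L w \<partial>(iso_gauss m s \<Otimes>\<^sub>M iso_gauss k t)) = kl_iso_gauss m s m0 v + kl_iso_gauss k t k0 u"
proof -
  define L1 where "L1 x = ln (iso_gauss_pdf m s x) - ln (iso_gauss_pdf m0 v x)" for x
  define L2 where "L2 y = ln (iso_gauss_pdf k t y) - ln (iso_gauss_pdf k0 u y)" for y
  have [measurable]: "L1 \<in> borel_measurable borel" "L2 \<in> borel_measurable borel"
    unfolding L1_def[abs_def] L2_def[abs_def] by measurable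
  have P1: "iso_gauss m0 v = density (iso_gauss m s) (\<lambda>x. ennreal (exp (- L1 x)))"
    unfolding L1_def using s v by (rule iso_gauss_eq_density_ln_ratio)
  have P2: "iso_gauss k0 u = density (iso_gauss k t) (\<lambda>y. ennreal (exp (- L2 y)))"
    unfolding L2_def using t u by (rule iso_gauss_eq_density_ln_ratio)
  have "iso_gauss m0 v \<Otimes>\<^sub>M iso_gauss k0 u =
      density (iso_gauss m s \<Otimes>\<^sub>M iso_gauss k t) (\<lambda>(x, y). ennreal (exp (- L1 x)) * ennreal (exp (- L2 y)))"
    unfolding P1 P2
  proof (rule pair_measure_density)
    show "sigma_finite_measure (iso_gauss k t)" "sigma_finite_measure (density (iso_gauss k t) (\<lambda>y. ennreal (exp (- L2 y))))"
      using t u by (simp_all add: P2[symmetric] prob_space_imp_sigma_finite prob_space_iso_gauss)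
  qed simp_all
  also have "\<dots> = density (iso_gauss m s \<Otimes>\<^sub>M iso_gauss k t) (\<lambda>w. ennreal (exp (- (L1 (fst w) + L2 (snd w)))))"
    by (intro density_cong) (auto simp: ennreal_mult[symmetric] exp_add[symmetric])
  finally have P: "iso_gauss m0 v \<Otimes>\<^sub>M iso_gauss k0 u =
      density (iso_gauss m s \<Otimes>\<^sub>M iso_gauss k t) (\<lambda>w. ennreal (exp (- (L1 (fst w) + L2 (snd w)))))" .
  have L1: "integrable (iso_gauss m s) L1" "(\<integral>x. L1 x \<partial>iso_gauss m s) = kl_iso_gauss m s m0 v"
    unfolding L1_def[abs_def] using integral_ln_iso_gauss_pdf_ratio[OF s v] by auto
  have L2: "integrable (iso_gauss k t) L2" "(\<integral>y. L2 y \<partial>iso_gauss k t) = kl_iso_gauss k t k0 u"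
    unfolding L2_def[abs_def] using integral_ln_iso_gauss_pdf_ratio[OF t u] by auto
  show ?thesis
    using that[OF P] integral_pair_measure_fst_add_snd[OF prob_space_iso_gauss[OF s] prob_space_iso_gauss[OF t] L1(1) L2(1)]
    by (simp add: L1(2) L2(2))
qed

section \<open>Concentration of the empirical risk\<close>

lemma nn_integral_exp_le_of_tail:
  fixes Y :: "'a \<Rightarrow> real" and N :: nat
  assumes M: "prob_space M" and [measurable]: "Y \<in> borel_measurable M"
    and Y: "\<And>x. x \<in> space M \<Longrightarrow> 0 \<le> Y x \<and> Y x \<le> real N"
    and tail: "\<And>j. 1 \<le> j \<Longrightarrow> measure M {x \<in> space M. real j \<le> Y x} \<le> 2 * exp (- real j)"
  shows "(\<integral>\<^sup>+x. ennreal (exp (Y x)) \<partial>M) \<le> ennreal (exp 1 * (1 + 2 * real N))"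
proof -
  interpret prob_space M by fact
  define A where "A j = {x \<in> space M. real j \<le> Y x}" for j :: nat
  have [measurable]: "A j \<in> sets M" for j
    unfolding A_def by measurable
  have "(\<integral>\<^sup>+x. ennreal (exp (Y x)) \<partial>M) \<le> (\<integral>\<^sup>+x. (\<Sum>j\<le>N. ennreal (exp (real j + 1)) * indicator (A j) x) \<partial>M)"
  proof (rule nn_integral_mono)
    fix x assume x: "x \<in> space M"
    define k where "k = nat \<lfloor>Y x\<rfloor>"
    have "real k = \<lfloor>Y x\<rfloor>"
      using Y[OF x] by (simp add: k_def)
    then have k: "real k \<le> Y x" "Y x \<le> real k + 1"
      using floor_correct[of "Y x"] by linarith+
    then have "real k \<le> real N"
      using Y[OF x] by linarith
    then have "k \<le> N" "x \<in> A k"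
      using k x unfolding A_def by auto
    then have "ennreal (exp (Y x)) \<le> ennreal (exp (real k + 1)) * indicator (A k) x"
      using k by simp
    also have "\<dots> \<le> (\<Sum>j\<le>N. ennreal (exp (real j + 1)) * indicator (A j) x)"
      using \<open>k \<le> N\<close> by (intro member_le_sum) auto
    finally show "ennreal (exp (Y x)) \<le> (\<Sum>j\<le>N. ennreal (exp (real j + 1)) * indicator (A j) x)" .
  qed
  also have "\<dots> = (\<Sum>j\<le>N. ennreal (exp (real j + 1)) * emeasure M (A j))"
    by (subst nn_integral_sum) (auto simp: nn_integral_cmult_indicator)
  also have "\<dots> = ennreal (\<Sum>j\<le>N. exp (real j + 1) * measure M (A j))"
    by (subst sum_ennreal[symmetric]) (auto simp: emeasure_eq_measure ennreal_mult)
  also have "(\<Sum>j\<le>N. exp (real j + 1) * measure M (A j)) =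
      exp 1 * measure M (A 0) + (\<Sum>j<N. exp (real (Suc j) + 1) * measure M (A (Suc j)))"
    by (simp add: sum.atMost_shift)
  also have "\<dots> \<le> exp 1 * 1 + (\<Sum>j<N. 2 * exp 1)"
  proof (intro add_mono mult_left_mono sum_mono)
    fix j
    have "exp (real (Suc j) + 1) * measure M (A (Suc j)) \<le> exp (real (Suc j) + 1) * (2 * exp (- real (Suc j)))"
      using tail[of "Suc j"] by (intro mult_left_mono) (auto simp: A_def)
    also have "\<dots> = 2 * exp 1"
      by (simp add: mult.left_commute exp_add[symmetric])
    finally show "exp (real (Suc j) + 1) * measure M (A (Suc j)) \<le> 2 * exp 1" .
  qed auto
  finally show ?thesis
    by (simp add: algebra_simps ennreal_leI)
qed

lemma indep_vars_PiM_components: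
  fixes D :: "'a measure" and I :: "'i set"
  assumes D: "prob_space D" and I: "finite I" "I \<noteq> {}"
  shows "prob_space.indep_vars (PiM I (\<lambda>_. D)) (\<lambda>_. D) (\<lambda>i S. S i) I"
proof -
  interpret M: prob_space "PiM I (\<lambda>_. D)"
    using D by (intro prob_space_PiM)
  have "distr (PiM I (\<lambda>_. D)) (PiM I (\<lambda>_. D)) (\<lambda>S. \<lambda>i\<in>I. S i) = PiM I (\<lambda>_. D)"
    by (subst distr_cong[where g="\<lambda>S. S"]) (auto simp: space_PiM PiE_def extensional_restrict)
  also have "\<dots> = PiM I (\<lambda>i. distr (PiM I (\<lambda>_. D)) D (\<lambda>S. S i))"
    using D I by (intro PiM_cong refl distr_PiM_component[symmetric])
  finally show ?thesis
    using I by (subst M.indep_vars_iff_distr_eq_PiM') auto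
qed

lemma hoeffding_sample:
  fixes D :: "'x measure" and f :: "'x \<Rightarrow> real" and n :: nat
  assumes D: "prob_space D" and [measurable]: "f \<in> borel_measurable D"
    and f01: "\<And>x. x \<in> space D \<Longrightarrow> 0 \<le> f x \<and> f x \<le> 1"
    and n: "0 < n" and \<epsilon>: "0 \<le> \<epsilon>"
  shows "measure (PiM {..<n} (\<lambda>_. D)) {S \<in> space (PiM {..<n} (\<lambda>_. D)).
           \<epsilon> \<le> \<bar>(\<Sum>i<n. f (S i)) / real n - (\<integral>x. f x \<partial>D)\<bar>} \<le> 2 * exp (- 2 * real n * \<epsilon>\<^sup>2)"
proof -
  let ?M = "PiM {..<n} (\<lambda>_. D)"
  interpret M: prob_space ?M
    using D by (intro prob_space_PiM)
  have [measurable]: "(\<lambda>S. S i) \<in> measurable ?M D" if "i < n" for i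
    using that by (intro measurable_component_singleton) auto
  have f0: "(\<lambda>S. f (S 0)) \<in> borel_measurable ?M"
    using n by measurable
  have distr_f: "distr ?M borel (\<lambda>S. f (S i)) = distr D borel f" if "i < n" for i
  proof -
    have "distr ?M borel (\<lambda>S. f (S i)) = distr (distr ?M D (\<lambda>S. S i)) borel f"
      using that by (subst distr_distr) (auto simp: comp_def)
    also have "distr ?M D (\<lambda>S. S i) = D"
      using that D by (intro distr_PiM_component) auto
    finally show ?thesis .
  qed
  have "M.expectation (\<lambda>S. f (S 0)) = integral\<^sup>L (distr ?M borel (\<lambda>S. f (S 0))) (\<lambda>x. x)"
    using f0 by (subst integral_distr) auto
  also have "\<dots> = integral\<^sup>L (distr D borel f) (\<lambda>x. x)"
    using n by (simp add: distr_f)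
  also have "\<dots> = (\<integral>x. f x \<partial>D)"
    by (rule integral_distr) measurable
  finally have expectation: "M.expectation (\<lambda>S. f (S 0)) = (\<integral>x. f x \<partial>D)" .
  interpret Hoeffding_ineq_iid ?M "{..<n}" "\<lambda>i S. f (S i)" "\<lambda>S. f (S 0)" 0 1 "M.expectation (\<lambda>S. f (S 0))"
  proof unfold_locales
    show "finite {..<n}"
      by simp
    show "M.indep_vars (\<lambda>_. borel) (\<lambda>i S. f (S i)) {..<n}"
      using M.indep_vars_compose2[OF indep_vars_PiM_components[OF D, of "{..<n}"], of "\<lambda>_. f" "\<lambda>_. borel"] n
      by auto
    show "distr ?M borel (\<lambda>S. f (S i)) = distr ?M borel (\<lambda>S. f (S 0))" if "i \<in> {..<n}" for i
      using that n by (simp add: distr_f)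
    show "AE S in ?M. f (S 0) \<in> {0..1}"
    proof (rule AE_I2)
      fix S assume "S \<in> space ?M"
      then have "S 0 \<in> space D"
        using PiE_mem[of S "{..<n}" "\<lambda>_. space D" 0] n by (simp add: space_PiM)
      then show "f (S 0) \<in> {0..1}"
        using f01 by simp
    qed
    show "(\<lambda>S. f (S 0)) \<in> borel_measurable ?M"
      by (rule f0)
  qed simp
  show ?thesis
    using Hoeffding_ineq_abs_ge'[OF \<epsilon>] n by (simp add: expectation lessThan_empty_iff)
qed

lemma (in prob_space) integral_in_unit_interval:
  fixes f :: "'a \<Rightarrow> real"
  assumes "f \<in> borel_measurable M" and f01: "\<And>x. x \<in> space M \<Longrightarrow> 0 \<le> f x \<and> f x \<le> 1"
  shows "0 \<le> (\<integral>x. f x \<partial>M) \<and> (\<integral>x. f x \<partial>M) \<le> 1"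
proof -
  have "integrable M f"
    using assms by (intro integrable_const_bound[where B=1]) auto
  then show ?thesis
    using f01 by (auto intro!: integral_nonneg_AE integral_le_const AE_I2)
qed

lemma sample_mean_in_unit_interval:
  fixes f :: "'x \<Rightarrow> real"
  assumes S: "S \<in> space (PiM {..<n} (\<lambda>_. D))" and f01: "\<And>x. x \<in> space D \<Longrightarrow> 0 \<le> f x \<and> f x \<le> 1"
  shows "0 \<le> (\<Sum>i<n. f (S i)) / real n \<and> (\<Sum>i<n. f (S i)) / real n \<le> 1"
proof -
  have fS: "0 \<le> f (S i) \<and> f (S i) \<le> 1" if "i < n" for i
    using f01 S that by (auto simp: space_PiM PiE_iff)
  then have "(\<Sum>i<n. f (S i)) \<le> (\<Sum>i<n. 1)"
    by (intro sum_mono) auto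
  then show ?thesis
    using fS by (auto intro!: sum_nonneg divide_nonneg_nonneg simp: divide_le_eq_1)
qed

lemma sample_gap_tail:
  fixes D :: "'x measure" and f :: "'x \<Rightarrow> real" and n :: nat and t :: real
  assumes D: "prob_space D" and f: "f \<in> borel_measurable D"
    and f01: "\<And>x. x \<in> space D \<Longrightarrow> 0 \<le> f x \<and> f x \<le> 1" and n: "0 < n" and t: "0 \<le> t"
  shows "measure (PiM {..<n} (\<lambda>_. D)) {S \<in> space (PiM {..<n} (\<lambda>_. D)).
           t \<le> 2 * real n * ((\<integral>x. f x \<partial>D) - (\<Sum>i<n. f (S i)) / real n)\<^sup>2} \<le> 2 * exp (- t)"
proof -
  let ?M = "PiM {..<n} (\<lambda>_. D)" and ?\<mu> = "\<integral>x. f x \<partial>D" and ?avg = "\<lambda>S. (\<Sum>i<n. f (S i)) / real n"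
  have "t \<le> 2 * real n * (?\<mu> - ?avg S)\<^sup>2 \<longleftrightarrow> t / (2 * real n) \<le> (?avg S - ?\<mu>)\<^sup>2" for S
    using n by (simp add: field_simps power2_commute)
  also have "\<dots> S \<longleftrightarrow> sqrt (t / (2 * real n)) \<le> \<bar>?avg S - ?\<mu>\<bar>" for S
    by (subst real_sqrt_le_iff[symmetric]) simp
  finally have "measure ?M {S \<in> space ?M. t \<le> 2 * real n * (?\<mu> - ?avg S)\<^sup>2}
      = measure ?M {S \<in> space ?M. sqrt (t / (2 * real n)) \<le> \<bar>?avg S - ?\<mu>\<bar>}"
    by simp
  also have "\<dots> \<le> 2 * exp (- 2 * real n * (sqrt (t / (2 * real n)))\<^sup>2)"
    using t by (intro hoeffding_sample[OF D f f01 n] real_sqrt_ge_zero divide_nonneg_nonneg) auto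
  also have "\<dots> = 2 * exp (- t)"
    using n t by simp
  finally show ?thesis .
qed

lemma exp_moment_sample:
  fixes D :: "'x measure" and f :: "'x \<Rightarrow> real" and n :: nat
  assumes D: "prob_space D" and f: "f \<in> borel_measurable D"
    and f01: "\<And>x. x \<in> space D \<Longrightarrow> 0 \<le> f x \<and> f x \<le> 1"
    and n: "0 < n"
  shows "(\<integral>\<^sup>+S. ennreal (exp (2 * real n * ((\<integral>x. f x \<partial>D) - (\<Sum>i<n. f (S i)) / real n)\<^sup>2))
            \<partial>PiM {..<n} (\<lambda>_. D)) \<le> ennreal (exp 1 * (1 + 4 * real n))"
proof -
  let ?M = "PiM {..<n} (\<lambda>_. D)"
  interpret D: prob_space D by fact
  define Y where "Y S = 2 * real n * ((\<integral>x. f x \<partial>D) - (\<Sum>i<n. f (S i)) / real n)\<^sup>2" for S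
  have "(\<integral>\<^sup>+S. ennreal (exp (Y S)) \<partial>?M) \<le> ennreal (exp 1 * (1 + 2 * real (2 * n)))"
  proof (rule nn_integral_exp_le_of_tail)
    show "prob_space ?M"
      using D by (rule prob_space_PiM)
    show "Y \<in> borel_measurable ?M"
      unfolding Y_def[abs_def]
      by (intro borel_measurable_times borel_measurable_const borel_measurable_power borel_measurable_diff
          borel_measurable_divide borel_measurable_sum)
        (auto intro!: measurable_compose[OF _ f] measurable_component_singleton)
    show "0 \<le> Y S \<and> Y S \<le> real (2 * n)" if "S \<in> space ?M" for S
    proof -
      have "\<bar>(\<integral>x. f x \<partial>D) - (\<Sum>i<n. f (S i)) / real n\<bar> \<le> 1"
        using D.integral_in_unit_interval[of f, OF f f01] sample_mean_in_unit_interval[of S n D f, OF that f01] by linarith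
      then have "real n * ((\<integral>x. f x \<partial>D) - (\<Sum>i<n. f (S i)) / real n)\<^sup>2 \<le> real n * 1"
        by (intro mult_left_mono) (auto simp: abs_square_le_1)
      then show ?thesis
        by (simp add: Y_def)
    qed
    show "measure ?M {S \<in> space ?M. real j \<le> Y S} \<le> 2 * exp (- real j)" for j
      unfolding Y_def by (rule sample_gap_tail[OF D f f01 n of_nat_0_le_iff])
  qed
  also have "ennreal (exp 1 * (1 + 2 * real (2 * n))) = ennreal (exp 1 * (1 + 4 * real n))"
    by simp
  finally show ?thesis
    unfolding Y_def .
qed

section \<open>PAC-Bayes change of measure\<close>

lemma (in prob_space) integral_le_ln_nn_integral_exp:
  fixes g :: "'a \<Rightarrow> real"
  assumes g: "integrable M g" and C: "(\<integral>\<^sup>+x. ennreal (exp (g x)) \<partial>M) \<le> ennreal C"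
  shows "(\<integral>x. g x \<partial>M) \<le> ln C"
proof -
  have "(\<integral>\<^sup>+x. ennreal (exp (g x)) \<partial>M) < \<infinity>"
    using C by (simp add: le_less_trans)
  then have exp_g: "integrable M (\<lambda>x. exp (g x))"
    using g by (intro integrableI_bounded) auto
  have "exp (\<integral>x. g x \<partial>M) \<le> (\<integral>x. exp (g x) \<partial>M)"
    by (rule jensens_inequality[where I=UNIV]) (simp_all add: g exp_g exp_convex)
  moreover have "ennreal (\<integral>x. exp (g x) \<partial>M) \<le> ennreal C"
    using C exp_g by (simp add: nn_integral_eq_integral)
  ultimately have "exp (\<integral>x. g x \<partial>M) \<le> C"
    by (smt (verit, ccfv_SIG) ennreal_le_iff2 exp_gt_zero)
  then show ?thesis
    by (metis exp_gt_zero less_le_trans ln_exp ln_le_cancel_iff)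
qed

lemma (in prob_space) square_integral_le_integral_square:
  fixes f :: "'a \<Rightarrow> real"
  assumes "integrable M f" "integrable M (\<lambda>x. (f x)\<^sup>2)"
  shows "(\<integral>x. f x \<partial>M)\<^sup>2 \<le> (\<integral>x. (f x)\<^sup>2 \<partial>M)"
  using variance_positive[of f] variance_eq[OF assms] by simp

lemma donsker_varadhan_le:
  fixes Q :: "'a measure" and F L :: "'a \<Rightarrow> real"
  assumes Q: "prob_space Q" and P: "P = density Q (\<lambda>w. ennreal (exp (- L w)))"
    and L: "integrable Q L" and F: "integrable Q F"
    and C: "(\<integral>\<^sup>+w. ennreal (exp (F w)) \<partial>P) \<le> ennreal C"
  shows "(\<integral>w. F w \<partial>Q) \<le> (\<integral>w. L w \<partial>Q) + ln C"
proof -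
  interpret Q: prob_space Q by fact
  have [measurable]: "L \<in> borel_measurable Q" "F \<in> borel_measurable Q"
    using L F by auto
  have "(\<integral>\<^sup>+w. ennreal (exp (F w - L w)) \<partial>Q) = (\<integral>\<^sup>+w. ennreal (exp (F w)) \<partial>P)"
    unfolding P by (subst nn_integral_density) (auto simp: ennreal_mult[symmetric] exp_diff exp_minus field_simps)
  then have "(\<integral>w. F w - L w \<partial>Q) \<le> ln C"
    using C F L by (intro Q.integral_le_ln_nn_integral_exp) auto
  then show ?thesis
    using F L by simp
qed

lemma pac_bayes_change_of_measure:
  fixes M :: "'s measure" and P :: "'w measure" and F :: "'s \<Rightarrow> 'w \<Rightarrow> real"
  assumes M: "prob_space M" and P: "prob_space P"
    and F[measurable]: "(\<lambda>(S, w). F S w) \<in> borel_measurable (M \<Otimes>\<^sub>M P)"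
    and mgf: "\<And>w. w \<in> space P \<Longrightarrow> (\<integral>\<^sup>+S. ennreal (exp (F S w)) \<partial>M) \<le> ennreal K"
    and K: "0 < K" and \<delta>: "0 < \<delta>"
  obtains E where "E \<in> sets M" and "measure M E \<le> \<delta>"
    and "\<And>S Q L. S \<in> space M - E \<Longrightarrow> prob_space Q \<Longrightarrow> P = density Q (\<lambda>w. ennreal (exp (- L w))) \<Longrightarrow>
           integrable Q L \<Longrightarrow> integrable Q (F S) \<Longrightarrow> (\<integral>w. F S w \<partial>Q) \<le> (\<integral>w. L w \<partial>Q) + ln (K / \<delta>)"
proof -
  interpret M: prob_space M by fact
  interpret P: prob_space P by fact
  interpret pair_sigma_finite M P ..
  define Z where "Z S = (\<integral>\<^sup>+w. ennreal (exp (F S w)) \<partial>P)" for S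
  have [measurable]: "Z \<in> borel_measurable M"
    unfolding Z_def by measurable
  have "(\<integral>\<^sup>+S. Z S \<partial>M) = (\<integral>\<^sup>+w. (\<integral>\<^sup>+S. ennreal (exp (F S w)) \<partial>M) \<partial>P)"
    unfolding Z_def by (rule Fubini'[symmetric]) measurable
  also have "\<dots> \<le> (\<integral>\<^sup>+w. ennreal K \<partial>P)"
    by (intro nn_integral_mono mgf)
  finally have Z_le: "(\<integral>\<^sup>+S. Z S \<partial>M) \<le> ennreal K"
    by (simp add: P.emeasure_space_1)
  define E where "E = {S \<in> space M. ennreal (K / \<delta>) < Z S}"
  have E: "E \<in> sets M"
    unfolding E_def by measurable
  have "ennreal (K / \<delta> * measure M E) = (\<integral>\<^sup>+S. ennreal (K / \<delta>) * indicator E S \<partial>M)"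
    using E K \<delta> by (simp add: nn_integral_cmult_indicator M.emeasure_eq_measure ennreal_mult'[symmetric])
  also have "\<dots> \<le> (\<integral>\<^sup>+S. Z S \<partial>M)"
    by (intro nn_integral_mono) (auto simp: E_def indicator_def less_imp_le)
  also have "\<dots> \<le> ennreal K"
    by (rule Z_le)
  finally have "K / \<delta> * measure M E \<le> K"
    using K by (subst (asm) ennreal_le_iff) auto
  then have "measure M E \<le> \<delta>"
    using K \<delta> by (simp add: field_simps)
  moreover have "(\<integral>w. F S w \<partial>Q) \<le> (\<integral>w. L w \<partial>Q) + ln (K / \<delta>)"
    if "S \<in> space M - E" "prob_space Q" "P = density Q (\<lambda>w. ennreal (exp (- L w)))"
      "integrable Q L" "integrable Q (F S)" for S Q L
  proof (rule donsker_varadhan_le[OF that(2-5)])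
    show "(\<integral>\<^sup>+w. ennreal (exp (F S w)) \<partial>P) \<le> ennreal (K / \<delta>)"
      using that(1) by (auto simp: E_def Z_def not_less)
  qed
  ultimately show ?thesis
    using that E by blast
qed

lemma borel_measurable_pop_risk:
  fixes D :: "'x measure" and W :: "('p \<times> 'q) measure" and l :: "'p \<Rightarrow> 'q \<Rightarrow> 'x \<Rightarrow> real"
  assumes "prob_space D" and l: "(\<lambda>(w, x). l (fst w) (snd w) x) \<in> borel_measurable (W \<Otimes>\<^sub>M D)"
  shows "(\<lambda>w. pop_risk D l (fst w) (snd w)) \<in> borel_measurable W"
proof -
  interpret D: prob_space D by fact
  show ?thesis
    unfolding pop_risk_def using l by (rule D.borel_measurable_lebesgue_integral)
qed

lemma borel_measurable_emp_risk:
  fixes D :: "'x measure" and W :: "('p \<times> 'q) measure" and l :: "'p \<Rightarrow> 'q \<Rightarrow> 'x \<Rightarrow> real"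
  assumes l: "(\<lambda>(w, x). l (fst w) (snd w) x) \<in> borel_measurable (W \<Otimes>\<^sub>M D)"
  shows "(\<lambda>(S, w). emp_risk n S l (fst w) (snd w)) \<in> borel_measurable (PiM {..<n} (\<lambda>_. D) \<Otimes>\<^sub>M W)"
proof -
  let ?M = "PiM {..<n} (\<lambda>_. D)"
  have "(\<lambda>(S, w). l (fst w) (snd w) (S i)) \<in> borel_measurable (?M \<Otimes>\<^sub>M W)" if "i < n" for i
  proof -
    have [measurable]: "(\<lambda>S. S i) \<in> measurable ?M D"
      using that by (intro measurable_component_singleton) auto
    have "(\<lambda>(S, w). (w, S i)) \<in> measurable (?M \<Otimes>\<^sub>M W) (W \<Otimes>\<^sub>M D)"
      by measurable
    from measurable_compose[OF this l] show ?thesis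
      by (simp add: case_prod_beta')
  qed
  then have "(\<lambda>p. (\<Sum>i<n. (\<lambda>(S, w). l (fst w) (snd w) (S i)) p) / real n) \<in> borel_measurable (?M \<Otimes>\<^sub>M W)"
    by (intro borel_measurable_divide borel_measurable_sum borel_measurable_const) simp
  then show ?thesis
    by (simp add: emp_risk_def case_prod_beta')
qed

lemma (in prob_space) square_integral_diff_le:
  fixes f g :: "'a \<Rightarrow> real"
  assumes [measurable]: "f \<in> borel_measurable M" "g \<in> borel_measurable M"
    and bounded: "\<And>x. x \<in> space M \<Longrightarrow> 0 \<le> f x \<and> f x \<le> 1 \<and> 0 \<le> g x \<and> g x \<le> 1"
  shows "integrable M (\<lambda>x. (f x - g x)\<^sup>2)"
    and "((\<integral>x. f x \<partial>M) - (\<integral>x. g x \<partial>M))\<^sup>2 \<le> (\<integral>x. (f x - g x)\<^sup>2 \<partial>M)"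
proof -
  have f: "integrable M f" and g: "integrable M g"
    using bounded by (auto intro!: integrable_const_bound[where B=1])
  have "\<bar>f x - g x\<bar> \<le> 1" if "x \<in> space M" for x
    using bounded[OF that] by linarith
  then show sq: "integrable M (\<lambda>x. (f x - g x)\<^sup>2)"
    by (intro integrable_const_bound[where B=1]) (auto simp: abs_square_le_1)
  have "((\<integral>x. f x \<partial>M) - (\<integral>x. g x \<partial>M))\<^sup>2 = (\<integral>x. f x - g x \<partial>M)\<^sup>2"
    using f g by simp
  also have "\<dots> \<le> (\<integral>x. (f x - g x)\<^sup>2 \<partial>M)"
    using f g sq by (intro square_integral_le_integral_square) auto
  finally show "((\<integral>x. f x \<partial>M) - (\<integral>x. g x \<partial>M))\<^sup>2 \<le> (\<integral>x. (f x - g x)\<^sup>2 \<partial>M)" .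
qed

lemma pac_bayes_sample_bound:
  fixes D :: "'x measure" and P :: "('p \<times> 'q) measure" and l :: "'p \<Rightarrow> 'q \<Rightarrow> 'x \<Rightarrow> real"
  assumes D: "prob_space D" and P: "prob_space P"
    and l: "(\<lambda>(w, x). l (fst w) (snd w) x) \<in> borel_measurable (P \<Otimes>\<^sub>M D)"
    and l01: "\<And>a b x. x \<in> space D \<Longrightarrow> 0 \<le> l a b x \<and> l a b x \<le> 1"
    and n: "0 < n" and \<delta>: "0 < \<delta>"
  shows "\<exists>E\<in>sets (PiM {..<n} (\<lambda>_. D)). measure (PiM {..<n} (\<lambda>_. D)) E \<le> \<delta> \<and>
    (\<forall>S\<in>space (PiM {..<n} (\<lambda>_. D)) - E. \<forall>Q L.
       prob_space Q \<longrightarrow> P = density Q (\<lambda>w. ennreal (exp (- L w))) \<longrightarrow> integrable Q L \<longrightarrow>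
       2 * real n * ((\<integral>w. pop_risk D l (fst w) (snd w) \<partial>Q) - (\<integral>w. emp_risk n S l (fst w) (snd w) \<partial>Q))\<^sup>2
         \<le> (\<integral>w. L w \<partial>Q) + ln (exp 1 * (1 + 4 * real n) / \<delta>))"
proof -
  interpret D: prob_space D by fact
  let ?M = "PiM {..<n} (\<lambda>_. D)"
  define F where "F S w = 2 * real n * (pop_risk D l (fst w) (snd w) - emp_risk n S l (fst w) (snd w))\<^sup>2" for S w
  have pop: "(\<lambda>w. pop_risk D l (fst w) (snd w)) \<in> borel_measurable P"
    using D l by (rule borel_measurable_pop_risk)
  have emp: "(\<lambda>(S, w). emp_risk n S l (fst w) (snd w)) \<in> borel_measurable (?M \<Otimes>\<^sub>M P)"
    using l by (rule borel_measurable_emp_risk)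
  have "(\<lambda>p. 2 * real n * (pop_risk D l (fst (snd p)) (snd (snd p)) - (\<lambda>(S, w). emp_risk n S l (fst w) (snd w)) p)\<^sup>2)
      \<in> borel_measurable (?M \<Otimes>\<^sub>M P)"
    using measurable_compose[OF measurable_snd pop] emp
    by (intro borel_measurable_times borel_measurable_power borel_measurable_diff borel_measurable_const) simp_all
  then have F: "(\<lambda>(S, w). F S w) \<in> borel_measurable (?M \<Otimes>\<^sub>M P)"
    by (simp add: F_def case_prod_beta')
  have mgf: "(\<integral>\<^sup>+S. ennreal (exp (F S w)) \<partial>?M) \<le> ennreal (exp 1 * (1 + 4 * real n))" if "w \<in> space P" for w
    using exp_moment_sample[OF D _ l01 n] measurable_Pair2[OF l that]
    by (simp add: F_def pop_risk_def emp_risk_def)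
  have K: "0 < exp 1 * (1 + 4 * real n)"
    by (intro mult_pos_pos) auto
  obtain E where E: "E \<in> sets ?M" "measure ?M E \<le> \<delta>"
    and E_bound: "\<And>S Q L. S \<in> space ?M - E \<Longrightarrow> prob_space Q \<Longrightarrow> P = density Q (\<lambda>w. ennreal (exp (- L w))) \<Longrightarrow>
           integrable Q L \<Longrightarrow> integrable Q (F S) \<Longrightarrow>
           (\<integral>w. F S w \<partial>Q) \<le> (\<integral>w. L w \<partial>Q) + ln (exp 1 * (1 + 4 * real n) / \<delta>)"
    using pac_bayes_change_of_measure[OF prob_space_PiM[OF D] P F mgf K \<delta>] by blast
  show ?thesis
  proof (intro bexI[OF _ E(1)] conjI ballI allI impI)
    fix S Q L
    assume S: "S \<in> space ?M - E" and Q: "prob_space Q"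
      and P_eq: "P = density Q (\<lambda>w. ennreal (exp (- L w)))" and L: "integrable Q L"
    interpret Q: prob_space Q by fact
    have sets_Q: "sets Q = sets P"
      by (simp add: P_eq)
    have meas: "(\<lambda>w. pop_risk D l (fst w) (snd w)) \<in> borel_measurable Q"
      "(\<lambda>w. emp_risk n S l (fst w) (snd w)) \<in> borel_measurable Q"
      using pop measurable_Pair2[OF emp, of S] S by (simp_all add: measurable_cong_sets[OF sets_Q refl])
    have bounds: "0 \<le> pop_risk D l (fst w) (snd w) \<and> pop_risk D l (fst w) (snd w) \<le> 1 \<and>
        0 \<le> emp_risk n S l (fst w) (snd w) \<and> emp_risk n S l (fst w) (snd w) \<le> 1" if "w \<in> space Q" for w
    proof -
      have "w \<in> space P"
        using that by (simp add: sets_eq_imp_space_eq[OF sets_Q])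
      then have "(\<lambda>x. l (fst w) (snd w) x) \<in> borel_measurable D"
        using measurable_Pair2[OF l] by simp
      then show ?thesis
        using D.integral_in_unit_interval[of "l (fst w) (snd w)"] sample_mean_in_unit_interval[of S n D "l (fst w) (snd w)"]
          S l01 by (simp add: pop_risk_def emp_risk_def)
    qed
    note gap = Q.square_integral_diff_le[OF meas bounds]
    have "2 * real n * ((\<integral>w. pop_risk D l (fst w) (snd w) \<partial>Q) - (\<integral>w. emp_risk n S l (fst w) (snd w) \<partial>Q))\<^sup>2
        \<le> (\<integral>w. F S w \<partial>Q)"
      using gap n by (simp add: F_def)
    also have "\<dots> \<le> (\<integral>w. L w \<partial>Q) + ln (exp 1 * (1 + 4 * real n) / \<delta>)"
      using gap by (intro E_bound[OF S Q P_eq L]) (simp add: F_def[abs_def])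
    finally show "2 * real n * ((\<integral>w. pop_risk D l (fst w) (snd w) \<partial>Q) - (\<integral>w. emp_risk n S l (fst w) (snd w) \<partial>Q))\<^sup>2
        \<le> (\<integral>w. L w \<partial>Q) + ln (exp 1 * (1 + 4 * real n) / \<delta>)" .
  qed (rule E(2))
qed

section \<open>The bound for Gaussian posteriors\<close>

lemma kl_iso_gauss_divide:
  fixes m m0 :: "real^'n"
  shows "kl_iso_gauss m s m0 v / (2 * real n) =
     (norm (m - m0))\<^sup>2 / (4 * v * real n) + real CARD('n) * (s / v + ln (v / s) - 1) / (4 * real n)"
  by (simp add: kl_iso_gauss_def add_divide_distrib mult.assoc)

lemma le_sqrt_add_sqrt:
  fixes x a b c :: real
  assumes "x\<^sup>2 \<le> a + b + 4 * c" "0 \<le> a" "0 \<le> b" "0 \<le> c"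
  shows "x \<le> sqrt (a + c) + sqrt (b + c)"
proof -
  have "c\<^sup>2 \<le> (a + c) * (b + c)"
    using assms by (simp add: algebra_simps power2_eq_square)
  then have "c \<le> sqrt ((a + c) * (b + c))"
    by (rule real_le_rsqrt)
  then have "a + b + 4 * c \<le> (sqrt (a + c) + sqrt (b + c))\<^sup>2"
    using assms by (simp add: power2_sum real_sqrt_mult)
  then have "sqrt (x\<^sup>2) \<le> sqrt (a + c) + sqrt (b + c)"
    using assms by (intro real_le_lsqrt) auto
  then show ?thesis
    by (simp add: real_sqrt_abs)
qed

lemma ln_exp_moment_bound_le:
  fixes n :: nat and \<delta> :: real
  assumes n: "0 < n" and \<delta>: "0 < \<delta>" "\<delta> < 1"
  shows "ln (exp 1 * (1 + 4 * real n) / \<delta>) \<le> 4 * ln (2 * sqrt (real n) / \<delta>)"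
proof -
  have n1: "1 \<le> real n"
    using n by simp
  have "exp 1 * (1 + 4 * real n) \<le> 3 * (5 * real n)"
    using exp_le n1 by (intro mult_mono) auto
  also have "\<dots> \<le> 16 * (real n * real n)"
    using mult_left_mono[OF n1, of "real n"] by simp
  finally have "exp 1 * (1 + 4 * real n) / \<delta> \<le> 16 * (real n * real n) / \<delta>"
    using \<delta> by (simp add: divide_right_mono)
  also have "\<dots> \<le> 16 * (real n * real n) / \<delta> ^ 4"
    using \<delta> by (intro divide_left_mono) (auto simp: power_le_one power4_eq_xxxx mult_le_one)
  also have "\<dots> = (2 * sqrt (real n) / \<delta>) ^ 4"
    by (simp add: power_divide power_mult_distrib power4_eq_xxxx)
  finally have "ln (exp 1 * (1 + 4 * real n) / \<delta>) \<le> ln ((2 * sqrt (real n) / \<delta>) ^ 4)"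
    using n \<delta> by (subst ln_le_cancel_iff) auto
  then show ?thesis
    using n \<delta> by (simp add: ln_realpow)
qed

lemma pac_bayes_gap_le_sqrt:
  fixes x a b \<delta> :: real and n :: nat
  assumes x: "2 * real n * x\<^sup>2 \<le> a + b + ln (exp 1 * (1 + 4 * real n) / \<delta>)"
    and n: "0 < n" and \<delta>: "0 < \<delta>" "\<delta> < 1" and "0 \<le> a" "0 \<le> b"
  shows "x \<le> sqrt (a / (2 * real n) + ln (2 * sqrt (real n) / \<delta>) / (2 * real n))
           + sqrt (b / (2 * real n) + ln (2 * sqrt (real n) / \<delta>) / (2 * real n))"
proof -
  define c where "c = ln (2 * sqrt (real n) / \<delta>) / (2 * real n)"
  have "1 \<le> sqrt (real n)"
    using n by simp
  then have "\<delta> \<le> 2 * sqrt (real n)"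
    using \<delta> by linarith
  then have "0 \<le> c"
    using \<delta> unfolding c_def by simp
  have "2 * real n * x\<^sup>2 \<le> a + b + 4 * ln (2 * sqrt (real n) / \<delta>)"
    using x ln_exp_moment_bound_le[OF n \<delta>] by linarith
  then have "x\<^sup>2 \<le> (a + b + 4 * ln (2 * sqrt (real n) / \<delta>)) / (2 * real n)"
    using n by (subst pos_le_divide_eq) (auto simp: mult.commute)
  then have "x\<^sup>2 \<le> a / (2 * real n) + b / (2 * real n) + 4 * c"
    by (simp add: c_def add_divide_distrib)
  then show ?thesis
    using le_sqrt_add_sqrt \<open>0 \<le> c\<close> assms(5,6) n unfolding c_def by simp
qed

lemma pac_bayes_iso_gauss_posterior:
  fixes phi phi0 :: "real^'p" and theta theta0 :: "real^'q" and R Rh :: "(real^'p) \<times> (real^'q) \<Rightarrow> real"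
  assumes pac: "\<And>Q L. prob_space Q \<Longrightarrow>
      iso_gauss phi0 vphi \<Otimes>\<^sub>M iso_gauss theta0 vtheta = density Q (\<lambda>w. ennreal (exp (- L w))) \<Longrightarrow>
      integrable Q L \<Longrightarrow>
      2 * real n * ((\<integral>w. R w \<partial>Q) - (\<integral>w. Rh w \<partial>Q))\<^sup>2 \<le> (\<integral>w. L w \<partial>Q) + ln (exp 1 * (1 + 4 * real n) / \<delta>)"
    and n: "0 < n" and \<delta>: "0 < \<delta>" "\<delta> < 1" and v: "0 < vphi" "0 < vtheta" and s: "0 < sphi" "0 < stheta"
  shows "(\<integral>w. R w \<partial>(iso_gauss phi sphi \<Otimes>\<^sub>M iso_gauss theta stheta))
           \<le> (\<integral>w. Rh w \<partial>(iso_gauss phi sphi \<Otimes>\<^sub>M iso_gauss theta stheta))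
             + sqrt ((norm (phi - phi0))\<^sup>2 / (4 * vphi * real n)
                     + real CARD('p) * (sphi / vphi + ln (vphi / sphi) - 1) / (4 * real n)
                     + ln (2 * sqrt (real n) / \<delta>) / (2 * real n))
             + sqrt ((norm (theta - theta0))\<^sup>2 / (4 * vtheta * real n)
                     + real CARD('q) * (stheta / vtheta + ln (vtheta / stheta) - 1) / (4 * real n)
                     + ln (2 * sqrt (real n) / \<delta>) / (2 * real n))"
proof -
  obtain L where P_eq: "iso_gauss phi0 vphi \<Otimes>\<^sub>M iso_gauss theta0 vtheta =
        density (iso_gauss phi sphi \<Otimes>\<^sub>M iso_gauss theta stheta) (\<lambda>w. ennreal (exp (- L w)))"
    and L: "integrable (iso_gauss phi sphi \<Otimes>\<^sub>M iso_gauss theta stheta) L"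
    and KL: "(\<integral>w. L w \<partial>(iso_gauss phi sphi \<Otimes>\<^sub>M iso_gauss theta stheta))
               = kl_iso_gauss phi sphi phi0 vphi + kl_iso_gauss theta stheta theta0 vtheta"
    using iso_gauss_pair_eq_density[OF s v] by blast
  have Q: "prob_space (iso_gauss phi sphi \<Otimes>\<^sub>M iso_gauss theta stheta)"
    using s by (intro prob_space_pair prob_space_iso_gauss)
  from pac_bayes_gap_le_sqrt[OF pac[OF Q P_eq L, unfolded KL] n \<delta>
      kl_iso_gauss_nonneg[OF s(1) v(1)] kl_iso_gauss_nonneg[OF s(2) v(2)]]
  show ?thesis
    unfolding kl_iso_gauss_divide by linarith
qed

theorem theorem3:
  fixes D :: "(real^'d) measure"
    and X :: "(real^'d) set"
    and l :: "real^'p \<Rightarrow> real^'q \<Rightarrow> real^'d \<Rightarrow> real"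
    and n :: nat
    and \<delta> :: real
    and phi0 :: "real^'p" and theta0 :: "real^'q"
    and vphi vtheta :: real
  assumes "prob_space D"
    and "space D = X"
    and "sets D = sets (restrict_space borel X)"
    and "(\<lambda>(phi, theta, x). l phi theta x) \<in> borel_measurable (borel \<Otimes>\<^sub>M borel \<Otimes>\<^sub>M D)"
    and "\<And>phi theta x. x \<in> X \<Longrightarrow> 0 \<le> l phi theta x \<and> l phi theta x \<le> 1"
    and "n > 0"
    and "0 < \<delta>" and "\<delta> < 1"
    and "vphi > 0" and "vtheta > 0"
  shows "\<exists>E \<in> sets (PiM {..<n} (\<lambda>_. D)).
           measure (PiM {..<n} (\<lambda>_. D)) E \<le> \<delta> \<and>
           (\<forall>S \<in> space (PiM {..<n} (\<lambda>_. D)) - E.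
             \<forall>phi theta sphi stheta. sphi > 0 \<longrightarrow> stheta > 0 \<longrightarrow>
               (\<integral>w. pop_risk D l (fst w) (snd w) \<partial>(iso_gauss phi sphi \<Otimes>\<^sub>M iso_gauss theta stheta))
               \<le> (\<integral>w. emp_risk n S l (fst w) (snd w) \<partial>(iso_gauss phi sphi \<Otimes>\<^sub>M iso_gauss theta stheta))
                 + sqrt ((norm (phi - phi0))\<^sup>2 / (4 * vphi * real n)
                         + real CARD('p) * (sphi / vphi + ln (vphi / sphi) - 1) / (4 * real n)
                         + ln (2 * sqrt (real n) / \<delta>) / (2 * real n))
                 + sqrt ((norm (theta - theta0))\<^sup>2 / (4 * vtheta * real n)
                         + real CARD('q) * (stheta / vtheta + ln (vtheta / stheta) - 1) / (4 * real n)
                         + ln (2 * sqrt (real n) / \<delta>) / (2 * real n)))"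
proof -
  note D = assms(1) and n = assms(6) and \<delta> = assms(7,8) and v = assms(9,10)
  let ?P = "iso_gauss phi0 vphi \<Otimes>\<^sub>M iso_gauss theta0 vtheta"
  have P: "prob_space ?P"
    using v by (intro prob_space_pair prob_space_iso_gauss)
  have "(\<lambda>(w, x). (fst w, snd w, x)) \<in> measurable (?P \<Otimes>\<^sub>M D) (borel \<Otimes>\<^sub>M borel \<Otimes>\<^sub>M D)"
    by measurable
  from measurable_compose[OF this assms(4)]
  have l: "(\<lambda>(w, x). l (fst w) (snd w) x) \<in> borel_measurable (?P \<Otimes>\<^sub>M D)"
    by (simp add: case_prod_beta')
  have l01: "\<And>a b x. x \<in> space D \<Longrightarrow> 0 \<le> l a b x \<and> l a b x \<le> 1"
    using assms(2,5) by blast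
  from pac_bayes_sample_bound[OF D P l l01 n \<delta>(1)] show ?thesis
    by (fast intro: pac_bayes_iso_gauss_posterior[OF _ n \<delta> v])
qed

end
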